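(* Let $d\in\mathbb{N}$, $0<s,p<\infty$ with $sp\ne d$. Let $\mathbb{Z}_+=\{0,1,\ldots\}$, $\|x\|_\infty=\max_i|x_i|$, and define $A_0=\{0\}$ and, for $n\ge1$, $A_n=\mathbb{Z}_+^d\cap[0,2^n-1]^d\setminus[0,2^{n-1}-1]^d$. Let $K\in\mathbb{N}$ satisfy \[2^{sp+1}(2^{p-1}\vee1)\,2^{-K|sp-d|}\le1,\] and let \[C(d,p,s,K)=\frac{2^{sp+1+K(d\wedge sp)}(2^{p-1}\vee1)}{1-2^{-d}}.\] If $sp<d$, then \[\sum_{j\in\mathbb{Z}_+^d\setminus\{0\}}\frac{|u(j)|^p}{\|j\|_\infty^{sp}}\le C(d,p,s,K)\sum_{n=1}^\infty\sum_{j\in A_n}\sum_{m\in A_{n+K}}\frac{|u(j)-u(m)|^p}{2^{(n+K)(d+sp)}}\] for all $u:\mathbb{Z}_+^d\to\mathbb{C}$ for which the left side is finite. If $d<sp$, then \[\sum_{\substack{j\in\mathbb{Z}_+^d\\ 2^K\le\|j\|_\infty}}\frac{|u(j)|^p}{\|j\|_\infty^{sp}}\le C(d,p,s,K)\sum_{n=1}^\infty\sum_{j\in A_n}\sum_{m\in A_{n+K}}\frac{|u(j)-u(m)|^p}{2^{(n+K)(d+sp)}}+\sum_{\substack{j\in\mathbb{Z}_+^d\\ 1\le\|j\|_\infty<2^K}}\frac{|u(j)|^p}{\|j\|_\infty^{sp}}\] for all $u:\mathbb{Z}_+^d\to\mathbb{C}$.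
   Context: $a\wedge b=\min(a,b)$, $a\vee b=\max(a,b)$. *)

theory Defs
  imports "HOL-Analysis.Analysis"
begin

text \<open>Points of Z_+^d are functions from a finite index type 'n (with d = CARD('n)) to nat.\<close>

definition supnorm :: "('n::finite \<Rightarrow> nat) \<Rightarrow> nat" where
  "supnorm j = Max (range j)"

definition Ablock :: "nat \<Rightarrow> ('n::finite \<Rightarrow> nat) set" where
  "Ablock n = (if n = 0 then {\<lambda>_. 0}
     else {j. \<forall>i. j i \<le> 2^n - 1} - {j. \<forall>i. j i \<le> 2^(n-1) - 1})"

definition Cconst :: "nat \<Rightarrow> real \<Rightarrow> real \<Rightarrow> nat \<Rightarrow> real" where
  "Cconst d p s K = 2 powr (s*p + 1 + real K * min (real d) (s*p)) * max (2 powr (p-1)) 1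
      / (1 - 2 powr (- real d))"

definition Rside :: "nat \<Rightarrow> real \<Rightarrow> real \<Rightarrow> (('n::finite \<Rightarrow> nat) \<Rightarrow> complex) \<Rightarrow> ennreal" where
  "Rside K p s u = (\<Sum>\<^sub>\<infinity> n\<in>{1..}. \<Sum>j\<in>Ablock n. \<Sum>m\<in>Ablock (n+K).
      ennreal (norm (u j - u m) powr p / 2 powr (real (n+K) * (real CARD('n) + s*p))))"

end

theory Submission
  imports Defs
begin

(* Split the nonzero points into the dyadic shells A_n, on which the sup-norm is comparable
   to 2^n, and let M_n = 2^(-n s p) * (sum over A_n of |u|^p).  Averaging
   |a|^p <= c (|a - b|^p + |b|^p), c = max (2^(p-1)) 1, over all pairs in A_n x A_(n+K) bounds
   M_n by a multiple of the n-th term of the right-hand side plus c 2^(-K (d - s p)) M_(n+K),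
   and symmetrically M_(n+K) by that term plus c 2^(-K (s p - d)) M_n; the factor 2^(K d) is
   the ratio of the shell sizes.  The choice of K makes the coefficient of the shifted mass at
   most 1/2, so it can be absorbed: for s p < d into the (finite) left-hand side, for s p > d
   into truncated sums, leaving the shells below 2^K as the error term. *)

lemma powr_add_le_subadditive:
  fixes x y p :: real
  assumes "0 \<le> x" "0 \<le> y" "0 < p" "p \<le> 1"
  shows "(x + y) powr p \<le> x powr p + y powr p"
proof (cases "x = 0 \<or> y = 0")
  case False
  then have xy: "0 < x" "0 < y" using assms by auto
  have frac_le: "t / (x + y) \<le> (t / (x + y)) powr p" if "0 < t" "t \<le> x + y" for t
    using powr_mono'[of p 1 "t / (x + y)"] that xy assms by simp
  have "1 = x / (x + y) + y / (x + y)" using xy by (simp add: add_divide_distrib[symmetric])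
  also have "\<dots> \<le> (x / (x + y)) powr p + (y / (x + y)) powr p"
    using frac_le[of x] frac_le[of y] xy by simp
  also have "\<dots> = (x powr p + y powr p) / (x + y) powr p"
    using xy by (simp add: powr_divide add_divide_distrib)
  finally show ?thesis using xy by (simp add: field_simps)
qed auto

lemma powr_add_le_convex:
  fixes x y p :: real
  assumes "0 \<le> x" "0 \<le> y" "1 \<le> p"
  shows "(x + y) powr p \<le> 2 powr (p - 1) * (x powr p + y powr p)"
proof (cases "x = 0 \<or> y = 0")
  case True
  then have "(x + y) powr p = 1 * (x powr p + y powr p)" by auto
  also have "\<dots> \<le> 2 powr (p - 1) * (x powr p + y powr p)"
    using assms by (intro mult_right_mono ge_one_powr_ge_zero) auto
  finally show ?thesis .
next
  case False
  then have "((1 - 1/2) *\<^sub>R x + (1/2) *\<^sub>R y) powr p \<le> (1 - 1/2) * x powr p + (1/2) * y powr p"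
    using convex_onD[OF powr_convex[OF assms(3)], of "1/2" x y] assms by auto
  then have midpoint: "((x + y) / 2) powr p \<le> (x powr p + y powr p) / 2"
    by (simp add: field_simps)
  have "(x + y) powr p = 2 powr p * ((x + y) / 2) powr p"
    using assms by (simp add: powr_divide)
  also have "\<dots> \<le> 2 powr p * ((x powr p + y powr p) / 2)"
    using midpoint by (intro mult_left_mono) auto
  also have "\<dots> = 2 powr (p - 1) * (x powr p + y powr p)"
    by (simp add: powr_diff)
  finally show ?thesis .
qed

lemma powr_add_le_max:
  fixes x y p :: real
  assumes "0 \<le> x" "0 \<le> y" "0 < p"
  shows "(x + y) powr p \<le> max (2 powr (p - 1)) 1 * (x powr p + y powr p)"
proof (cases "1 \<le> p")
  case True
  then have "(x + y) powr p \<le> 2 powr (p - 1) * (x powr p + y powr p)"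
    using assms by (intro powr_add_le_convex) auto
  also have "\<dots> \<le> max (2 powr (p - 1)) 1 * (x powr p + y powr p)"
    by (intro mult_right_mono) auto
  finally show ?thesis .
next
  case False
  then have "(x + y) powr p \<le> x powr p + y powr p"
    using assms by (intro powr_add_le_subadditive) auto
  also have "\<dots> \<le> max (2 powr (p - 1)) 1 * (x powr p + y powr p)"
    using mult_right_mono[of 1 "max (2 powr (p - 1)) 1" "x powr p + y powr p"] by simp
  finally show ?thesis .
qed

lemma norm_powr_le_diff_powr:
  fixes a b :: "'a::real_normed_vector"
  assumes "0 < p"
  shows "norm a powr p \<le> max (2 powr (p - 1)) 1 * (norm (a - b) powr p + norm b powr p)"
proof -
  have "norm a powr p \<le> (norm (a - b) + norm b) powr p"
    using norm_triangle_sub[of a b] assms by (intro powr_mono2) (auto simp: add.commute)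
  also have "\<dots> \<le> max (2 powr (p - 1)) 1 * (norm (a - b) powr p + norm b powr p)"
    using assms by (intro powr_add_le_max) auto
  finally show ?thesis .
qed

lemma card_mult_sum_norm_powr_le:
  fixes u :: "'a \<Rightarrow> 'b::real_normed_vector"
  assumes "0 < p"
  shows "real (card B) * (\<Sum>j\<in>A. norm (u j) powr p)
     \<le> max (2 powr (p - 1)) 1 * ((\<Sum>j\<in>A. \<Sum>m\<in>B. norm (u j - u m) powr p)
                                + real (card A) * (\<Sum>m\<in>B. norm (u m) powr p))"
proof -
  let ?c = "max (2 powr (p - 1)) 1"
  have "real (card B) * (\<Sum>j\<in>A. norm (u j) powr p) = (\<Sum>j\<in>A. \<Sum>m\<in>B. norm (u j) powr p)"
    by (simp add: sum_distrib_left)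
  also have "\<dots> \<le> (\<Sum>j\<in>A. \<Sum>m\<in>B. ?c * (norm (u j - u m) powr p + norm (u m) powr p))"
    using assms by (intro sum_mono norm_powr_le_diff_powr)
  also have "\<dots> = ?c * ((\<Sum>j\<in>A. \<Sum>m\<in>B. norm (u j - u m) powr p)
                       + real (card A) * (\<Sum>m\<in>B. norm (u m) powr p))"
    by (simp add: sum_distrib_left[symmetric] sum.distrib distrib_left)
  finally show ?thesis .
qed

lemma infsum_cmult_right_ennreal:
  fixes f :: "'a \<Rightarrow> ennreal"
  assumes "c < \<infinity>"
  shows "(\<Sum>\<^sub>\<infinity>x\<in>A. c * f x) = c * (\<Sum>\<^sub>\<infinity>x\<in>A. f x)"
proof (rule infsumI)
  have "(f has_sum infsum f A) A" by (simp add: has_sum_infsum nonneg_summable_on_complete)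
  then show "((\<lambda>x. c * f x) has_sum c * infsum f A) A"
    unfolding has_sum_def sum_distrib_left[symmetric] using assms by (intro ennreal_tendsto_cmult) auto
qed

lemma ennreal_half: "ennreal (1 / 2) = 1 / 2"
  using ennreal_divide_numeral[of 1 "num.Bit0 num.One"] by simp

lemma ennreal_absorb_half:
  fixes x a \<epsilon> :: ennreal
  assumes "x \<le> a + \<epsilon> * x" "\<epsilon> \<le> 1/2" "x < \<infinity>"
  shows "x \<le> 2 * a"
proof (cases a)
  case (real r)
  obtain y where y: "x = ennreal y" "0 \<le> y" using assms(3) by (cases x) auto
  have "x \<le> a + x / 2"
    using assms(1) mult_right_mono[OF assms(2), of x] by (simp add: ennreal_divide_times add_left_mono order_trans)
  moreover have "x / 2 = ennreal (y / 2)" using y by (simp add: ennreal_divide_numeral)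
  ultimately have "y \<le> r + y / 2" using y real by (simp add: ennreal_plus[symmetric] del: ennreal_plus)
  then have "ennreal y \<le> ennreal (2 * r)" by (intro ennreal_leI) linarith
  then show ?thesis using real y by (simp add: ennreal_mult)
qed simp

lemma sum_le_infsum_ennreal:
  fixes f :: "'a \<Rightarrow> ennreal"
  assumes "finite F" "F \<subseteq> A"
  shows "sum f F \<le> (\<Sum>\<^sub>\<infinity>x\<in>A. f x)"
proof -
  have "sum f F = (\<Sum>\<^sub>\<infinity>x\<in>F. f x)" using assms(1) by simp
  also have "\<dots> \<le> (\<Sum>\<^sub>\<infinity>x\<in>A. f x)"
    using assms(2) by (intro infsum_mono_neutral nonneg_summable_on_complete) auto
  finally show ?thesis .
qed

(* infsum_Sigma needs a uniform space, which ennreal is not. *)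
lemma infsum_UN_disjoint_ennreal:
  fixes f :: "'a \<Rightarrow> ennreal"
  assumes fin: "\<And>n. n \<in> N \<Longrightarrow> finite (B n)" and disj: "disjoint_family_on B N"
  shows "(\<Sum>\<^sub>\<infinity>j\<in>(\<Union>n\<in>N. B n). f j) = (\<Sum>\<^sub>\<infinity>n\<in>N. \<Sum>j\<in>B n. f j)"
proof -
  have sum_UN: "(\<Sum>j\<in>(\<Union>n\<in>G. B n). f j) = (\<Sum>n\<in>G. \<Sum>j\<in>B n. f j)" if "finite G" "G \<subseteq> N" for G
    using that fin disjoint_family_on_mono[OF that(2) disj]
    by (intro sum.UNION_disjoint) (auto simp: disjoint_family_on_def)
  show ?thesis
  proof (rule antisym)
    show "(\<Sum>\<^sub>\<infinity>j\<in>(\<Union>n\<in>N. B n). f j) \<le> (\<Sum>\<^sub>\<infinity>n\<in>N. \<Sum>j\<in>B n. f j)"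
    proof (rule infsum_le_finite_sums)
      fix F assume F: "finite F" "F \<subseteq> (\<Union>n\<in>N. B n)"
      then obtain g where g: "\<And>x. x \<in> F \<Longrightarrow> g x \<in> N \<and> x \<in> B (g x)"
        by (metis UN_E subsetD)
      define G where "G = g ` F"
      have G: "finite G" "G \<subseteq> N" "F \<subseteq> (\<Union>n\<in>G. B n)"
        using F g unfolding G_def by auto
      have "sum f F \<le> (\<Sum>j\<in>(\<Union>n\<in>G. B n). f j)"
        using G fin by (intro sum_mono2) auto
      also have "\<dots> = (\<Sum>n\<in>G. \<Sum>j\<in>B n. f j)" by (rule sum_UN[OF G(1,2)])
      also have "\<dots> \<le> (\<Sum>\<^sub>\<infinity>n\<in>N. \<Sum>j\<in>B n. f j)"
        using G(1,2) by (rule sum_le_infsum_ennreal)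
      finally show "sum f F \<le> (\<Sum>\<^sub>\<infinity>n\<in>N. \<Sum>j\<in>B n. f j)" .
    qed (simp add: nonneg_summable_on_complete)
    show "(\<Sum>\<^sub>\<infinity>n\<in>N. \<Sum>j\<in>B n. f j) \<le> (\<Sum>\<^sub>\<infinity>j\<in>(\<Union>n\<in>N. B n). f j)"
    proof (rule infsum_le_finite_sums)
      fix G assume G: "finite G" "G \<subseteq> N"
      have "(\<Sum>n\<in>G. \<Sum>j\<in>B n. f j) = (\<Sum>j\<in>(\<Union>n\<in>G. B n). f j)" using G by (rule sum_UN[symmetric])
      also have "\<dots> \<le> (\<Sum>\<^sub>\<infinity>j\<in>(\<Union>n\<in>N. B n). f j)"
        using G fin by (intro sum_le_infsum_ennreal) auto
      finally show "(\<Sum>n\<in>G. \<Sum>j\<in>B n. f j) \<le> (\<Sum>\<^sub>\<infinity>j\<in>(\<Union>n\<in>N. B n). f j)" .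
    qed (simp add: nonneg_summable_on_complete)
  qed
qed

lemma infsum_forward_absorb_ennreal:
  fixes m r :: "nat \<Rightarrow> ennreal" and \<kappa> \<epsilon> :: ennreal
  assumes step: "\<And>n. 1 \<le> n \<Longrightarrow> m n \<le> \<kappa> * r n + \<epsilon> * m (n + K)"
    and "\<kappa> < \<infinity>" "\<epsilon> \<le> 1/2" and finite: "(\<Sum>\<^sub>\<infinity>n\<in>{1..}. m n) < \<infinity>"
  shows "(\<Sum>\<^sub>\<infinity>n\<in>{1..}. m n) \<le> 2 * \<kappa> * (\<Sum>\<^sub>\<infinity>n\<in>{1..}. r n)"
proof -
  let ?S = "\<Sum>\<^sub>\<infinity>n\<in>{1..}. m n"
  have "(\<Sum>\<^sub>\<infinity>n\<in>{1..}. m (n + K)) = (\<Sum>\<^sub>\<infinity>n\<in>(\<lambda>n. n + K) ` {1..}. m n)"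
    by (simp add: infsum_reindex o_def)
  also have "\<dots> \<le> ?S"
    by (intro infsum_mono_neutral nonneg_summable_on_complete) auto
  finally have shift: "(\<Sum>\<^sub>\<infinity>n\<in>{1..}. m (n + K)) \<le> ?S" .
  have "\<epsilon> < \<infinity>"
    using le_less_trans[OF assms(3)[folded ennreal_half] ennreal_less_top] by simp
  have "?S \<le> (\<Sum>\<^sub>\<infinity>n\<in>{1..}. \<kappa> * r n + \<epsilon> * m (n + K))"
    using step by (intro infsum_mono nonneg_summable_on_complete) auto
  also have "\<dots> = \<kappa> * (\<Sum>\<^sub>\<infinity>n\<in>{1..}. r n) + \<epsilon> * (\<Sum>\<^sub>\<infinity>n\<in>{1..}. m (n + K))"
    using assms(2) \<open>\<epsilon> < \<infinity>\<close>
    by (simp add: infsum_add nonneg_summable_on_complete infsum_cmult_right_ennreal)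
  also have "\<dots> \<le> \<kappa> * (\<Sum>\<^sub>\<infinity>n\<in>{1..}. r n) + \<epsilon> * ?S"
    using shift by (intro add_left_mono mult_left_mono) auto
  finally show ?thesis
    using ennreal_absorb_half assms(3) finite by (simp add: mult.assoc)
qed

lemma infsum_backward_absorb_ennreal:
  fixes m r :: "nat \<Rightarrow> ennreal" and \<kappa> \<epsilon> :: ennreal
  assumes step: "\<And>n. 1 \<le> n \<Longrightarrow> m (n + K) \<le> \<kappa> * r n + \<epsilon> * m n"
    and "\<epsilon> \<le> 1/2" and finite: "\<And>n. m n < \<infinity>"
  shows "(\<Sum>\<^sub>\<infinity>n\<in>{K+1..}. m n) \<le> 2 * \<kappa> * (\<Sum>\<^sub>\<infinity>n\<in>{1..}. r n) + 2 * \<epsilon> * (\<Sum>n\<in>{1..K}. m n)"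
proof (rule infsum_le_finite_sums)
  \<comment> \<open>The tail sum is not known to be finite, so the shifted term is absorbed on truncations.\<close>
  let ?B = "\<Sum>n\<in>{1..K}. m n"
  have truncated: "(\<Sum>n\<in>{K+1..N+K}. m n) \<le> 2 * \<kappa> * (\<Sum>\<^sub>\<infinity>n\<in>{1..}. r n) + 2 * \<epsilon> * ?B" for N
  proof -
    let ?T = "\<Sum>n\<in>{K+1..N+K}. m n"
    have "(\<Sum>n\<in>{1..N}. m n) \<le> (\<Sum>n\<in>{1..N+K}. m n)"
      by (intro sum_mono2) auto
    also have "{1..N+K} = {1..K} \<union> {K+1..N+K}" by auto
    also have "(\<Sum>n\<in>{1..K} \<union> {K+1..N+K}. m n) = ?B + ?T"
      by (intro sum.union_disjoint) auto
    finally have head: "(\<Sum>n\<in>{1..N}. m n) \<le> ?B + ?T" .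
    have "?T = (\<Sum>n\<in>{1..N}. m (n + K))"
      using sum.shift_bounds_cl_nat_ivl[of m 1 K N] by (simp add: add.commute)
    also have "\<dots> \<le> (\<Sum>n\<in>{1..N}. \<kappa> * r n + \<epsilon> * m n)"
      by (intro sum_mono step) auto
    also have "\<dots> = \<kappa> * (\<Sum>n\<in>{1..N}. r n) + \<epsilon> * (\<Sum>n\<in>{1..N}. m n)"
      by (simp add: sum.distrib sum_distrib_left)
    also have "\<dots> \<le> \<kappa> * (\<Sum>\<^sub>\<infinity>n\<in>{1..}. r n) + \<epsilon> * (?B + ?T)"
      using head
      by (intro add_mono mult_left_mono sum_le_infsum_ennreal) auto
    finally have "?T \<le> (\<kappa> * (\<Sum>\<^sub>\<infinity>n\<in>{1..}. r n) + \<epsilon> * ?B) + \<epsilon> * ?T"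
      by (simp add: distrib_left add.assoc)
    then have "?T \<le> 2 * (\<kappa> * (\<Sum>\<^sub>\<infinity>n\<in>{1..}. r n) + \<epsilon> * ?B)"
      using assms(2) finite by (intro ennreal_absorb_half) auto
    then show ?thesis by (simp add: distrib_left mult.assoc)
  qed
  fix F assume F: "finite F" "F \<subseteq> {K+1..}"
  have "x \<le> Max (insert 0 F)" if "x \<in> F" for x
    using F(1) that by (intro Max_ge) auto
  then have "F \<subseteq> {K+1..Max (insert 0 F) + K}"
    using F(2) by (force intro: trans_le_add1)
  then have "sum m F \<le> (\<Sum>n\<in>{K+1..Max (insert 0 F) + K}. m n)"
    by (intro sum_mono2) auto
  also note truncated
  finally show "sum m F \<le> 2 * \<kappa> * (\<Sum>\<^sub>\<infinity>n\<in>{1..}. r n) + 2 * \<epsilon> * ?B" .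
qed (simp add: nonneg_summable_on_complete)

section \<open>Dyadic shells\<close>

lemma supnorm_le_iff: "supnorm j \<le> M \<longleftrightarrow> (\<forall>i. j i \<le> M)"
  unfolding supnorm_def by (subst Max_le_iff) auto

lemma supnorm_less_iff: "supnorm j < M \<longleftrightarrow> (\<forall>i. j i < M)"
  unfolding supnorm_def by (subst Max_less_iff) auto

lemma supnorm_eq_0_iff: "supnorm j = 0 \<longleftrightarrow> j = (\<lambda>_. 0)"
  using supnorm_le_iff[of j 0] by auto

lemma mem_Ablock_iff:
  assumes "1 \<le> n"
  shows "j \<in> Ablock n \<longleftrightarrow> 2 ^ (n - 1) \<le> supnorm j \<and> supnorm j < 2 ^ n"
proof -
  have "(\<forall>i. j i \<le> 2 ^ k - 1) \<longleftrightarrow> supnorm j < 2 ^ k" for k :: nat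
    using supnorm_less_iff[of j "2 ^ k"] by (auto simp: less_Suc_eq_le[symmetric])
  then show ?thesis using assms unfolding Ablock_def by (auto simp: not_less)
qed

lemma Ablock_0: "Ablock 0 = {\<lambda>_. 0}"
  unfolding Ablock_def by simp

lemma supnorm_less_if_mem_Ablock: "j \<in> Ablock n \<Longrightarrow> supnorm j < 2 ^ n"
  by (cases "n = 0") (auto simp: Ablock_0 mem_Ablock_iff supnorm_eq_0_iff[THEN iffD2])

lemma Ablock_disjoint:
  assumes "n < m"
  shows "Ablock n \<inter> Ablock m = {}"
proof -
  have below: "supnorm j < 2 ^ (m - 1)" if "j \<in> Ablock n" for j
    using supnorm_less_if_mem_Ablock[OF that] power_increasing[of n "m - 1" "2::nat"] assms
    by linarith
  then show ?thesis using assms by (force simp: mem_Ablock_iff dest: below)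
qed

lemma disjoint_family_Ablock: "disjoint_family Ablock"
  unfolding disjoint_family_on_def
  by (metis Ablock_disjoint inf_commute linorder_neq_iff)

lemma supnorm_between_eq_UN_Ablock:
  "{j :: 'n::finite \<Rightarrow> nat. 2 ^ a \<le> supnorm j \<and> supnorm j < 2 ^ b} = (\<Union>n\<in>{a+1..b}. Ablock n)"
proof (intro set_eqI iffI)
  fix j :: "'n \<Rightarrow> nat" assume "j \<in> {j. 2 ^ a \<le> supnorm j \<and> supnorm j < 2 ^ b}"
  then have j: "2 ^ a \<le> supnorm j" "supnorm j < 2 ^ b" by auto
  then have "1 \<le> supnorm j" by (meson le_trans one_le_power one_le_numeral)
  then obtain k where k: "2 ^ k \<le> supnorm j" "supnorm j < 2 ^ (k + 1)"
    using ex_power_ivl1[of 2 "supnorm j"] by auto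
  have "a < k + 1" "k < b"
    using j k by (meson le_less_trans nat_power_less_imp_less pos2)+
  moreover have "j \<in> Ablock (k + 1)" using k by (simp add: mem_Ablock_iff)
  ultimately show "j \<in> (\<Union>n\<in>{a+1..b}. Ablock n)" by auto
next
  fix j :: "'n \<Rightarrow> nat" assume "j \<in> (\<Union>n\<in>{a+1..b}. Ablock n)"
  then obtain n where n: "a + 1 \<le> n" "n \<le> b" "j \<in> Ablock n" by auto
  then have "2 ^ (n - 1) \<le> supnorm j" "supnorm j < 2 ^ n" by (simp_all add: mem_Ablock_iff)
  moreover have "(2::nat) ^ a \<le> 2 ^ (n - 1)" "(2::nat) ^ n \<le> 2 ^ b"
    using n by (auto intro: power_increasing)
  ultimately show "j \<in> {j. 2 ^ a \<le> supnorm j \<and> supnorm j < 2 ^ b}"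
    by (metis (mono_tags) mem_Collect_eq order_trans less_le_trans)
qed

lemma supnorm_ge_eq_UN_Ablock: "{j. 2 ^ a \<le> supnorm j} = (\<Union>n\<in>{a+1..}. Ablock n)"
proof -
  have "{j. 2 ^ a \<le> supnorm j} = (\<Union>b. {j. 2 ^ a \<le> supnorm j \<and> supnorm j < 2 ^ b})"
    using less_exp by blast
  also have "\<dots> = (\<Union>n\<in>{a+1..}. Ablock n)"
    unfolding supnorm_between_eq_UN_Ablock by (auto simp: UN_iff) (meson atLeastAtMost_iff le_refl)
  finally show ?thesis .
qed

lemma UN_Ablock_eq_nonzero: "(\<Union>n\<in>{1..}. Ablock n) = UNIV - {\<lambda>_. 0}"
proof -
  have "(\<Union>n\<in>{1..}. Ablock n) = (\<Union>n\<in>{0+1..}. Ablock n)" by simp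
  also have "\<dots> = {j. 2 ^ 0 \<le> supnorm j}" by (rule supnorm_ge_eq_UN_Ablock[symmetric])
  also have "\<dots> = UNIV - {\<lambda>_. 0}"
    using supnorm_eq_0_iff by (auto simp: Suc_le_eq) (metis less_numeral_extra(3))
  finally show ?thesis .
qed

lemma cube_eq_PiE: "{j. \<forall>i. j i \<le> M} = PiE UNIV (\<lambda>_. {..M})"
  by (auto simp: PiE_UNIV_domain)

lemma finite_Ablock: "finite (Ablock n)"
  unfolding Ablock_def cube_eq_PiE by (simp add: finite_PiE)

lemma card_Ablock:
  assumes "1 \<le> n"
  shows "real (card (Ablock n :: ('n::finite \<Rightarrow> nat) set))
           = (1 - 2 powr - real CARD('n)) * 2 powr (real n * real CARD('n))"
proof -
  let ?d = "CARD('n)"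
  have "{j::'n \<Rightarrow> nat. \<forall>i. j i \<le> 2 ^ (n - 1) - 1} \<subseteq> {j. \<forall>i. j i \<le> 2 ^ n - 1}"
    by (auto intro: le_trans[OF _ diff_le_mono[OF power_increasing]])
  then have "card (Ablock n :: ('n \<Rightarrow> nat) set) = (2 ^ n) ^ ?d - (2 ^ (n - 1)) ^ ?d"
    using assms unfolding Ablock_def by (simp add: card_Diff_subset cube_eq_PiE card_PiE finite_PiE)
  moreover have "(2::nat) ^ (n - 1) \<le> 2 ^ n" by (intro power_increasing) auto
  ultimately have "real (card (Ablock n :: ('n \<Rightarrow> nat) set)) = (2 powr real n) powr ?d - (2 powr real (n - 1)) powr ?d"
    by (simp add: of_nat_diff power_mono powr_realpow)
  also have "\<dots> = (1 - 2 powr - real ?d) * 2 powr (real n * real ?d)"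
    using assms by (simp add: powr_powr of_nat_diff left_diff_distrib powr_add[symmetric] algebra_simps)
  finally show ?thesis .
qed

lemma supnorm_powr_bounds:
  assumes "j \<in> Ablock n" "1 \<le> n" "0 \<le> q"
  shows "2 powr (real n * q) / 2 powr q \<le> real (supnorm j) powr q"
    and "real (supnorm j) powr q \<le> 2 powr (real n * q)"
    and "0 < real (supnorm j) powr q"
proof -
  have s: "2 ^ (n - 1) \<le> supnorm j" "supnorm j < 2 ^ n"
    using assms(1,2) by (simp_all add: mem_Ablock_iff)
  then have "2 powr real (n - 1) \<le> real (supnorm j)" "real (supnorm j) \<le> 2 powr real n"
    using powr_realpow[of 2 "n - 1"] powr_realpow[of 2 n] by simp_all
  then have "(2 powr real (n - 1)) powr q \<le> real (supnorm j) powr q"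
    and "real (supnorm j) powr q \<le> (2 powr real n) powr q"
    using assms(3) by (auto intro: powr_mono2)
  moreover have "(2 powr real (n - 1)) powr q = 2 powr (real n * q) / 2 powr q"
    using assms(2) by (simp add: of_nat_diff powr_diff powr_divide powr_powr)
  ultimately show "2 powr (real n * q) / 2 powr q \<le> real (supnorm j) powr q"
    and "real (supnorm j) powr q \<le> 2 powr (real n * q)"
    by (simp_all add: powr_powr)
  show "0 < real (supnorm j) powr q"
    using s(1) less_le_trans[of 0 "2 ^ (n - 1)" "supnorm j"] by (simp add: powr_gt_zero)
qed

section \<open>Dyadic masses\<close>

definition dyadic_mass :: "(('n::finite \<Rightarrow> nat) \<Rightarrow> 'a::real_normed_vector) \<Rightarrow> real \<Rightarrow> real \<Rightarrow> nat \<Rightarrow> real" where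
  "dyadic_mass u p q n = (\<Sum>j\<in>Ablock n. norm (u j) powr p) / 2 powr (real n * q)"

definition dyadic_oscillation ::
    "(('n::finite \<Rightarrow> nat) \<Rightarrow> 'a::real_normed_vector) \<Rightarrow> real \<Rightarrow> real \<Rightarrow> nat \<Rightarrow> nat \<Rightarrow> real" where
  "dyadic_oscillation u p q K n =
     (\<Sum>j\<in>Ablock n. \<Sum>m\<in>Ablock (n + K). norm (u j - u m) powr p)
       / 2 powr (real (n + K) * (real CARD('n) + q))"

definition weighted_block_sum :: "(('n::finite \<Rightarrow> nat) \<Rightarrow> 'a::real_normed_vector) \<Rightarrow> real \<Rightarrow> real \<Rightarrow> nat \<Rightarrow> real" where
  "weighted_block_sum u p q n = (\<Sum>j\<in>Ablock n. norm (u j) powr p / real (supnorm j) powr q)"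

lemma dyadic_mass_nonneg: "0 \<le> dyadic_mass u p q n"
  unfolding dyadic_mass_def by (intro divide_nonneg_nonneg sum_nonneg) auto

lemma dyadic_oscillation_nonneg: "0 \<le> dyadic_oscillation u p q K n"
  unfolding dyadic_oscillation_def by (intro divide_nonneg_nonneg sum_nonneg) auto

lemma dyadic_mass_le_weighted_block_sum:
  assumes "1 \<le> n" "0 \<le> q"
  shows "dyadic_mass u p q n \<le> weighted_block_sum u p q n"
  unfolding dyadic_mass_def weighted_block_sum_def sum_divide_distrib
proof (intro sum_mono divide_left_mono)
  fix j assume "j \<in> Ablock n"
  from supnorm_powr_bounds[OF this assms] show "real (supnorm j) powr q \<le> 2 powr (real n * q)"
    and "0 < 2 powr (real n * q) * real (supnorm j) powr q"
    by simp_all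
qed auto

lemma weighted_block_sum_le_dyadic_mass:
  assumes "1 \<le> n" "0 \<le> q"
  shows "weighted_block_sum u p q n \<le> 2 powr q * dyadic_mass u p q n"
proof -
  have "weighted_block_sum u p q n \<le> (\<Sum>j\<in>Ablock n. norm (u j) powr p / (2 powr (real n * q) / 2 powr q))"
    unfolding weighted_block_sum_def
    using supnorm_powr_bounds[OF _ assms] by (intro sum_mono divide_left_mono) (auto intro!: divide_pos_pos mult_pos_pos)
  also have "\<dots> = 2 powr q * dyadic_mass u p q n"
    unfolding dyadic_mass_def sum_divide_distrib sum_distrib_left by (intro sum.cong) auto
  finally show ?thesis .
qed

lemma dyadic_mass_le_shift:
  fixes u :: "('n::finite \<Rightarrow> nat) \<Rightarrow> 'a::real_normed_vector"
  assumes "0 < p" "1 \<le> n"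
  shows "dyadic_mass u p q n
    \<le> max (2 powr (p - 1)) 1 * 2 powr (real K * q) / (1 - 2 powr - real CARD('n))
          * dyadic_oscillation u p q K n
      + max (2 powr (p - 1)) 1 * 2 powr (- (real K * (real CARD('n) - q))) * dyadic_mass u p q (n + K)"
proof -
  define c where "c = max (2 powr (p - 1)) (1::real)"
  define \<beta> where "\<beta> = 1 - 2 powr - real CARD('n)"
  define X Y Z W where "X = 2 powr (real n * CARD('n))" and "Y = 2 powr (real K * CARD('n))"
    and "Z = 2 powr (real n * q)" and "W = 2 powr (real K * q)"
  define a a' D where "a = (\<Sum>j\<in>Ablock n. norm (u j) powr p)"
    and "a' = (\<Sum>m\<in>Ablock (n + K). norm (u m) powr p)"
    and "D = (\<Sum>j\<in>Ablock n. \<Sum>m\<in>Ablock (n + K). norm (u j - u m) powr p)"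
  have pos: "0 < \<beta>" "0 < X" "0 < Y" "0 < Z" "0 < W" "0 \<le> c"
    unfolding \<beta>_def X_def Y_def Z_def W_def c_def by (auto simp: powr_minus_divide)
  have "real (card (Ablock (n + K) :: ('n \<Rightarrow> nat) set)) * a \<le> c * (D + real (card (Ablock n :: ('n \<Rightarrow> nat) set)) * a')"
    unfolding a_def a'_def D_def c_def using assms(1) by (rule card_mult_sum_norm_powr_le)
  then have key: "\<beta> * X * Y * a \<le> c * (D + \<beta> * X * a')"
    using assms(2) by (simp add: card_Ablock \<beta>_def X_def Y_def distrib_right powr_add mult.assoc)
  have "dyadic_mass u p q n = (\<beta> * X * Y * a) / (\<beta> * X * Y * Z)"
    using pos unfolding dyadic_mass_def a_def Z_def by simp
  also have "\<dots> \<le> c * (D + \<beta> * X * a') / (\<beta> * X * Y * Z)"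
    using key pos by (intro divide_right_mono) auto
  also have "\<dots> = c * W / \<beta> * (D / (X * Y * Z * W)) + c * (W / Y) * (a' / (Z * W))"
    using pos by (simp add: field_simps)
  finally show ?thesis
    unfolding dyadic_mass_def dyadic_oscillation_def a'_def D_def c_def[symmetric] \<beta>_def[symmetric]
    by (simp add: X_def Y_def Z_def W_def powr_add[symmetric] powr_diff[symmetric] algebra_simps)
qed

lemma dyadic_mass_shift_le:
  fixes u :: "('n::finite \<Rightarrow> nat) \<Rightarrow> 'a::real_normed_vector"
  assumes "0 < p" "1 \<le> n"
  shows "dyadic_mass u p q (n + K)
    \<le> max (2 powr (p - 1)) 1 * 2 powr (real K * CARD('n)) / (1 - 2 powr - real CARD('n))
          * dyadic_oscillation u p q K n
      + max (2 powr (p - 1)) 1 * 2 powr (- (real K * (q - real CARD('n)))) * dyadic_mass u p q n"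
proof -
  define c where "c = max (2 powr (p - 1)) (1::real)"
  define \<beta> where "\<beta> = 1 - 2 powr - real CARD('n)"
  define X Y Z W where "X = 2 powr (real n * CARD('n))" and "Y = 2 powr (real K * CARD('n))"
    and "Z = 2 powr (real n * q)" and "W = 2 powr (real K * q)"
  define a a' D where "a = (\<Sum>j\<in>Ablock n. norm (u j) powr p)"
    and "a' = (\<Sum>m\<in>Ablock (n + K). norm (u m) powr p)"
    and "D = (\<Sum>j\<in>Ablock n. \<Sum>m\<in>Ablock (n + K). norm (u j - u m) powr p)"
  have pos: "0 < \<beta>" "0 < X" "0 < Y" "0 < Z" "0 < W" "0 \<le> c"
    unfolding \<beta>_def X_def Y_def Z_def W_def c_def by (auto simp: powr_minus_divide)
  have D_swap: "D = (\<Sum>m\<in>Ablock (n + K). \<Sum>j\<in>Ablock n. norm (u m - u j) powr p)"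
    unfolding D_def by (subst sum.swap) (simp add: norm_minus_commute)
  have "real (card (Ablock n :: ('n \<Rightarrow> nat) set)) * a' \<le> c * (D + real (card (Ablock (n + K) :: ('n \<Rightarrow> nat) set)) * a)"
    unfolding a_def a'_def c_def D_swap using assms(1) by (rule card_mult_sum_norm_powr_le)
  then have key: "\<beta> * X * a' \<le> c * (D + \<beta> * X * Y * a)"
    using assms(2) by (simp add: card_Ablock \<beta>_def X_def Y_def distrib_right powr_add mult.assoc)
  have "dyadic_mass u p q (n + K) = (\<beta> * X * a') / (\<beta> * X * Z * W)"
    using pos unfolding dyadic_mass_def a'_def Z_def W_def by (simp add: distrib_right powr_add)
  also have "\<dots> \<le> c * (D + \<beta> * X * Y * a) / (\<beta> * X * Z * W)"
    using key pos by (intro divide_right_mono) auto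
  also have "\<dots> = c * Y / \<beta> * (D / (X * Y * Z * W)) + c * (Y / W) * (a / Z)"
    using pos by (simp add: field_simps)
  finally show ?thesis
    unfolding dyadic_mass_def dyadic_oscillation_def a_def D_def c_def[symmetric] \<beta>_def[symmetric]
    by (simp add: X_def Y_def Z_def W_def powr_add[symmetric] powr_diff[symmetric] algebra_simps)
qed

lemma infsum_supnorm_weight_UN_Ablock:
  "(\<Sum>\<^sub>\<infinity>j\<in>(\<Union>n\<in>N. Ablock n). ennreal (norm (u j) powr p / real (supnorm j) powr q))
     = (\<Sum>\<^sub>\<infinity>n\<in>N. ennreal (weighted_block_sum u p q n))"
proof -
  have "(\<Sum>\<^sub>\<infinity>j\<in>(\<Union>n\<in>N. Ablock n). ennreal (norm (u j) powr p / real (supnorm j) powr q))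
      = (\<Sum>\<^sub>\<infinity>n\<in>N. \<Sum>j\<in>Ablock n. ennreal (norm (u j) powr p / real (supnorm j) powr q))"
    using disjoint_family_Ablock by (intro infsum_UN_disjoint_ennreal finite_Ablock) (auto simp: disjoint_family_on_def)
  also have "\<dots> = (\<Sum>\<^sub>\<infinity>n\<in>N. ennreal (weighted_block_sum u p q n))"
    unfolding weighted_block_sum_def by (intro infsum_cong sum_ennreal) auto
  finally show ?thesis .
qed

lemma infsum_weighted_block_sum_le:
  assumes "N \<subseteq> {1..}" "0 \<le> q"
  shows "(\<Sum>\<^sub>\<infinity>n\<in>N. ennreal (weighted_block_sum u p q n))
           \<le> ennreal (2 powr q) * (\<Sum>\<^sub>\<infinity>n\<in>N. ennreal (dyadic_mass u p q n))"
proof -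
  have "(\<Sum>\<^sub>\<infinity>n\<in>N. ennreal (weighted_block_sum u p q n))
          \<le> (\<Sum>\<^sub>\<infinity>n\<in>N. ennreal (2 powr q) * ennreal (dyadic_mass u p q n))"
    using assms weighted_block_sum_le_dyadic_mass[of _ q u p]
    by (intro infsum_mono nonneg_summable_on_complete)
       (auto simp: dyadic_mass_nonneg ennreal_mult[symmetric] intro: ennreal_leI)
  also have "\<dots> = ennreal (2 powr q) * (\<Sum>\<^sub>\<infinity>n\<in>N. ennreal (dyadic_mass u p q n))"
    by (simp add: infsum_cmult_right_ennreal)
  finally show ?thesis .
qed

lemma Rside_eq_infsum_dyadic_oscillation:
  "Rside K p s u = (\<Sum>\<^sub>\<infinity>n\<in>{1..}. ennreal (dyadic_oscillation u p (s * p) K n))"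
  unfolding Rside_def dyadic_oscillation_def
  by (intro infsum_cong) (simp add: sum_ennreal sum_nonneg sum_divide_distrib)

lemma shift_coefficient_le_half:
  assumes "0 \<le> q" "0 \<le> \<epsilon>" "2 powr (q + 1) * \<epsilon> \<le> 1"
  shows "ennreal \<epsilon> \<le> 1 / 2"
proof -
  have "2 * \<epsilon> \<le> 2 powr (q + 1) * \<epsilon>"
    using assms(1,2) powr_mono[of 1 "q + 1" 2] by (intro mult_right_mono) auto
  then have "ennreal \<epsilon> \<le> ennreal (1 / 2)" using assms(3) by (intro ennreal_leI) linarith
  then show ?thesis by (simp only: ennreal_half)
qed

lemma hardy_dyadic_subcritical:
  fixes u :: "('n::finite \<Rightarrow> nat) \<Rightarrow> 'a::real_normed_vector"
  assumes "0 < p" "0 \<le> q"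
    and small: "2 powr (q + 1) * max (2 powr (p - 1)) 1 * 2 powr (- real K * (real CARD('n) - q)) \<le> 1"
    and finite: "(\<Sum>\<^sub>\<infinity>j\<in>UNIV - {\<lambda>_. 0}. ennreal (norm (u j) powr p / real (supnorm j) powr q)) < \<infinity>"
  shows "(\<Sum>\<^sub>\<infinity>j\<in>UNIV - {\<lambda>_. 0}. ennreal (norm (u j) powr p / real (supnorm j) powr q))
           \<le> ennreal (2 powr (q + 1 + real K * q) * max (2 powr (p - 1)) 1 / (1 - 2 powr - real CARD('n)))
              * (\<Sum>\<^sub>\<infinity>n\<in>{1..}. ennreal (dyadic_oscillation u p q K n))"
proof -
  define \<kappa> where "\<kappa> = max (2 powr (p - 1)) 1 * 2 powr (real K * q) / (1 - 2 powr - real CARD('n))"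
  define \<epsilon> where "\<epsilon> = max (2 powr (p - 1)) 1 * 2 powr (- (real K * (real CARD('n) - q)))"
  let ?lhs = "\<Sum>\<^sub>\<infinity>j\<in>UNIV - {\<lambda>_. 0}. ennreal (norm (u j) powr p / real (supnorm j) powr q)"
  let ?M = "\<Sum>\<^sub>\<infinity>n\<in>{1..}. ennreal (dyadic_mass u p q n)"
  let ?R = "\<Sum>\<^sub>\<infinity>n\<in>{1..}. ennreal (dyadic_oscillation u p q K n)"
  have lhs_eq: "?lhs = (\<Sum>\<^sub>\<infinity>n\<in>{1..}. ennreal (weighted_block_sum u p q n))"
    by (simp only: UN_Ablock_eq_nonzero[symmetric] infsum_supnorm_weight_UN_Ablock)
  have "?M \<le> ?lhs"
    unfolding lhs_eq using assms(2)
    by (intro infsum_mono nonneg_summable_on_complete ennreal_leI dyadic_mass_le_weighted_block_sum) auto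
  then have "?M < \<infinity>" using finite by simp
  have "0 < 1 - 2 powr - real CARD('n)" by (auto simp: powr_minus_divide)
  then have "0 \<le> \<kappa>" "0 \<le> \<epsilon>"
    unfolding \<kappa>_def \<epsilon>_def by auto
  have "ennreal \<epsilon> \<le> 1 / 2"
    using assms(2) \<open>0 \<le> \<epsilon>\<close> small unfolding \<epsilon>_def by (intro shift_coefficient_le_half) (auto simp: mult.assoc)
  have step: "ennreal (dyadic_mass u p q n)
      \<le> ennreal \<kappa> * ennreal (dyadic_oscillation u p q K n) + ennreal \<epsilon> * ennreal (dyadic_mass u p q (n + K))"
    if "1 \<le> n" for n
    using dyadic_mass_le_shift[OF assms(1) that, of u q K] \<open>0 \<le> \<kappa>\<close> \<open>0 \<le> \<epsilon>\<close>
    unfolding \<kappa>_def[symmetric] \<epsilon>_def[symmetric]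
    by (simp add: ennreal_leI dyadic_mass_nonneg dyadic_oscillation_nonneg flip: ennreal_mult ennreal_plus)
  have "?lhs \<le> ennreal (2 powr q) * ?M"
    unfolding lhs_eq using assms(2) by (intro infsum_weighted_block_sum_le) auto
  also have "\<dots> \<le> ennreal (2 powr q) * (2 * ennreal \<kappa> * ?R)"
    using step \<open>ennreal \<epsilon> \<le> 1 / 2\<close> \<open>?M < \<infinity>\<close>
    by (intro mult_left_mono infsum_forward_absorb_ennreal) auto
  also have "\<dots> = ennreal (2 * 2 powr q * \<kappa>) * ?R"
    using \<open>0 \<le> \<kappa>\<close> by (simp add: ennreal_mult mult_ac)
  also have "2 * 2 powr q * \<kappa> = 2 powr (q + 1 + real K * q) * max (2 powr (p - 1)) 1 / (1 - 2 powr - real CARD('n))"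
    by (simp add: \<kappa>_def powr_add)
  finally show ?thesis .
qed

lemma hardy_dyadic_supercritical:
  fixes u :: "('n::finite \<Rightarrow> nat) \<Rightarrow> 'a::real_normed_vector"
  assumes "0 < p" "0 \<le> q"
    and small: "2 powr (q + 1) * max (2 powr (p - 1)) 1 * 2 powr (- real K * (q - real CARD('n))) \<le> 1"
  shows "(\<Sum>\<^sub>\<infinity>j\<in>{j. 2 ^ K \<le> supnorm j}. ennreal (norm (u j) powr p / real (supnorm j) powr q))
           \<le> ennreal (2 powr (q + 1 + real K * real CARD('n)) * max (2 powr (p - 1)) 1
                        / (1 - 2 powr - real CARD('n)))
              * (\<Sum>\<^sub>\<infinity>n\<in>{1..}. ennreal (dyadic_oscillation u p q K n))
            + (\<Sum>\<^sub>\<infinity>j\<in>{j. 1 \<le> supnorm j \<and> supnorm j < 2 ^ K}.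
                 ennreal (norm (u j) powr p / real (supnorm j) powr q))"
proof -
  define \<kappa> where "\<kappa> = max (2 powr (p - 1)) 1 * 2 powr (real K * CARD('n)) / (1 - 2 powr - real CARD('n))"
  define \<epsilon> where "\<epsilon> = max (2 powr (p - 1)) 1 * 2 powr (- (real K * (q - real CARD('n))))"
  let ?M = "\<lambda>n. ennreal (dyadic_mass u p q n)"
  let ?R = "\<Sum>\<^sub>\<infinity>n\<in>{1..}. ennreal (dyadic_oscillation u p q K n)"
  let ?head = "\<Sum>n\<in>{1..K}. ennreal (weighted_block_sum u p q n)"
  have tail_eq: "(\<Sum>\<^sub>\<infinity>j\<in>{j. 2 ^ K \<le> supnorm j}. ennreal (norm (u j) powr p / real (supnorm j) powr q))
      = (\<Sum>\<^sub>\<infinity>n\<in>{K+1..}. ennreal (weighted_block_sum u p q n))"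
    by (simp only: supnorm_ge_eq_UN_Ablock infsum_supnorm_weight_UN_Ablock)
  have "{j :: 'n \<Rightarrow> nat. 1 \<le> supnorm j \<and> supnorm j < 2 ^ K} = (\<Union>n\<in>{1..K}. Ablock n)"
    using supnorm_between_eq_UN_Ablock[of 0 K] by simp
  then have head_eq: "(\<Sum>\<^sub>\<infinity>j\<in>{j. 1 \<le> supnorm j \<and> supnorm j < 2 ^ K}.
      ennreal (norm (u j) powr p / real (supnorm j) powr q)) = ?head"
    by (simp add: infsum_supnorm_weight_UN_Ablock)
  have "0 < 1 - 2 powr - real CARD('n)" by (auto simp: powr_minus_divide)
  then have "0 \<le> \<kappa>" "0 \<le> \<epsilon>"
    unfolding \<kappa>_def \<epsilon>_def by auto
  have two_eps: "2 * (2 powr q * \<epsilon>) \<le> 1" using small unfolding \<epsilon>_def by (simp add: powr_add mult_ac)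
  have "ennreal \<epsilon> \<le> 1 / 2"
    using assms(2) \<open>0 \<le> \<epsilon>\<close> small unfolding \<epsilon>_def by (intro shift_coefficient_le_half) (auto simp: mult.assoc)
  have step: "?M (n + K) \<le> ennreal \<kappa> * ennreal (dyadic_oscillation u p q K n) + ennreal \<epsilon> * ?M n"
    if "1 \<le> n" for n
    using dyadic_mass_shift_le[OF assms(1) that, of u q K] \<open>0 \<le> \<kappa>\<close> \<open>0 \<le> \<epsilon>\<close>
    unfolding \<kappa>_def[symmetric] \<epsilon>_def[symmetric]
    by (simp add: ennreal_leI dyadic_mass_nonneg dyadic_oscillation_nonneg flip: ennreal_mult ennreal_plus)
  have "(\<Sum>\<^sub>\<infinity>n\<in>{K+1..}. ennreal (weighted_block_sum u p q n)) \<le> ennreal (2 powr q) * (\<Sum>\<^sub>\<infinity>n\<in>{K+1..}. ?M n)"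
    using assms(2) by (intro infsum_weighted_block_sum_le) auto
  also have "\<dots> \<le> ennreal (2 powr q) * (2 * ennreal \<kappa> * ?R + 2 * ennreal \<epsilon> * (\<Sum>n\<in>{1..K}. ?M n))"
    using step \<open>ennreal \<epsilon> \<le> 1 / 2\<close> by (intro mult_left_mono infsum_backward_absorb_ennreal) auto
  also have "\<dots> = ennreal (2 * 2 powr q * \<kappa>) * ?R + ennreal (2 * (2 powr q * \<epsilon>)) * (\<Sum>n\<in>{1..K}. ?M n)"
    using \<open>0 \<le> \<kappa>\<close> \<open>0 \<le> \<epsilon>\<close> by (simp add: ennreal_mult distrib_left mult_ac)
  also have "\<dots> \<le> ennreal (2 * 2 powr q * \<kappa>) * ?R + 1 * ?head"
    using two_eps assms(2) dyadic_mass_le_weighted_block_sum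
    by (intro add_left_mono mult_mono sum_mono ennreal_leI) (auto simp flip: ennreal_1)
  also have "2 * 2 powr q * \<kappa> = 2 powr (q + 1 + real K * real CARD('n)) * max (2 powr (p - 1)) 1
                                     / (1 - 2 powr - real CARD('n))"
    by (simp add: \<kappa>_def powr_add)
  finally show ?thesis unfolding tail_eq head_eq by simp
qed

theorem lemma2p1:
  fixes u :: "('n::finite \<Rightarrow> nat) \<Rightarrow> complex"
    and s p :: real and K :: nat
  assumes "0 < s" and "0 < p" and "s * p \<noteq> real CARD('n)"
    and "2 powr (s*p + 1) * max (2 powr (p-1)) 1 * 2 powr (- real K * \<bar>s*p - real CARD('n)\<bar>) \<le> 1"
  shows "(s * p < real CARD('n) \<longrightarrow>
           (\<Sum>\<^sub>\<infinity> j\<in>UNIV - {\<lambda>_. 0}. ennreal (norm (u j) powr p / real (supnorm j) powr (s*p))) < \<infinity> \<longrightarrow>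
           (\<Sum>\<^sub>\<infinity> j\<in>UNIV - {\<lambda>_. 0}. ennreal (norm (u j) powr p / real (supnorm j) powr (s*p)))
             \<le> ennreal (Cconst CARD('n) p s K) * Rside K p s u)
       \<and> (real CARD('n) < s * p \<longrightarrow>
           (\<Sum>\<^sub>\<infinity> j\<in>{j. 2^K \<le> supnorm j}. ennreal (norm (u j) powr p / real (supnorm j) powr (s*p)))
             \<le> ennreal (Cconst CARD('n) p s K) * Rside K p s u
               + (\<Sum>\<^sub>\<infinity> j\<in>{j. 1 \<le> supnorm j \<and> supnorm j < 2^K}. ennreal (norm (u j) powr p / real (supnorm j) powr (s*p))))"
proof -
  have q: "0 \<le> s * p" using assms(1,2) by simp
  show ?thesis
  proof (intro conjI impI)
    assume "s * p < real CARD('n)"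
      and "(\<Sum>\<^sub>\<infinity>j\<in>UNIV - {\<lambda>_. 0}. ennreal (norm (u j) powr p / real (supnorm j) powr (s*p))) < \<infinity>"
    moreover have "2 powr (s*p + 1) * max (2 powr (p-1)) 1 * 2 powr (- real K * (real CARD('n) - s*p)) \<le> 1"
      using assms(4) \<open>s * p < real CARD('n)\<close> by (simp add: abs_of_neg)
    ultimately show "(\<Sum>\<^sub>\<infinity>j\<in>UNIV - {\<lambda>_. 0}. ennreal (norm (u j) powr p / real (supnorm j) powr (s*p)))
        \<le> ennreal (Cconst CARD('n) p s K) * Rside K p s u"
      using hardy_dyadic_subcritical[OF assms(2) q, of K u]
      by (simp add: Cconst_def Rside_eq_infsum_dyadic_oscillation min_def)
  next
    assume "real CARD('n) < s * p"
    moreover have "2 powr (s*p + 1) * max (2 powr (p-1)) 1 * 2 powr (- real K * (s*p - real CARD('n))) \<le> 1"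
      using assms(4) \<open>real CARD('n) < s * p\<close> by simp
    ultimately show "(\<Sum>\<^sub>\<infinity>j\<in>{j. 2^K \<le> supnorm j}. ennreal (norm (u j) powr p / real (supnorm j) powr (s*p)))
        \<le> ennreal (Cconst CARD('n) p s K) * Rside K p s u
          + (\<Sum>\<^sub>\<infinity>j\<in>{j. 1 \<le> supnorm j \<and> supnorm j < 2^K}. ennreal (norm (u j) powr p / real (supnorm j) powr (s*p)))"
      using hardy_dyadic_supercritical[OF assms(2) q, of K u]
      by (simp add: Cconst_def Rside_eq_infsum_dyadic_oscillation min_def)
  qed
qed

end
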